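(* Let $\mathbb{Q}\subset K$ be a totally real Galois extension of finite degree. Then $\overline{N}_{K/\mathbb{Q}}=\mathbb{Q}$.
   Context: $\overline{N}_{K/\mathbb{Q}}$ is the set of all finite sums $\sum_iN_{K/\mathbb{Q}}(a_i)$ with $a_i\in K$, where $N_{K/\mathbb{Q}}$ is the field norm. A number field is totally real if all its embeddings into $\mathbb{C}$ land in $\mathbb{R}$. *)

theory Defs
  imports Complex_Main "Jordan_Normal_Form.Determinant"
begin

text \<open>Number fields are modelled as subfields K of the complex numbers that are
finite-dimensional over the rationals.\<close>

definition is_subfield :: "complex set \<Rightarrow> bool" where
  "is_subfield K \<longleftrightarrow> 0 \<in> K \<and> 1 \<in> K \<and>
     (\<forall>x\<in>K. \<forall>y\<in>K. x + y \<in> K \<and> x * y \<in> K) \<and>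
     (\<forall>x\<in>K. - x \<in> K \<and> inverse x \<in> K)"

definition rat_lin_indep :: "complex list \<Rightarrow> bool" where
  "rat_lin_indep bs \<longleftrightarrow>
     (\<forall>c :: nat \<Rightarrow> rat. (\<Sum>i<length bs. of_rat (c i) * bs ! i) = 0 \<longrightarrow> (\<forall>i<length bs. c i = 0))"

definition rat_span_list :: "complex list \<Rightarrow> complex set" where
  "rat_span_list bs = {(\<Sum>i<length bs. of_rat (c i) * bs ! i) | c :: nat \<Rightarrow> rat. True}"

definition is_rat_basis :: "complex set \<Rightarrow> complex list \<Rightarrow> bool" where
  "is_rat_basis K bs \<longleftrightarrow> set bs \<subseteq> K \<and> rat_lin_indep bs \<and> rat_span_list bs = K"

definition number_field :: "complex set \<Rightarrow> bool" where
  "number_field K \<longleftrightarrow> is_subfield K \<and> (\<exists>bs. is_rat_basis K bs)"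

definition field_embedding :: "complex set \<Rightarrow> (complex \<Rightarrow> complex) \<Rightarrow> bool" where
  "field_embedding K \<sigma> \<longleftrightarrow> \<sigma> 1 = 1 \<and>
     (\<forall>x\<in>K. \<forall>y\<in>K. \<sigma> (x + y) = \<sigma> x + \<sigma> y \<and> \<sigma> (x * y) = \<sigma> x * \<sigma> y)"

definition totally_real :: "complex set \<Rightarrow> bool" where
  "totally_real K \<longleftrightarrow> (\<forall>\<sigma>. field_embedding K \<sigma> \<longrightarrow> \<sigma> ` K \<subseteq> \<real>)"

text \<open>Galois over Q (characteristic 0, so separable automatically): normal, i.e.
every embedding of K into C maps K into K.\<close>
definition galois_over_Q :: "complex set \<Rightarrow> bool" where
  "galois_over_Q K \<longleftrightarrow> (\<forall>\<sigma>. field_embedding K \<sigma> \<longrightarrow> \<sigma> ` K \<subseteq> K)"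

definition mult_matrix :: "complex list \<Rightarrow> complex \<Rightarrow> rat mat" where
  "mult_matrix bs a = (THE M. M \<in> carrier_mat (length bs) (length bs) \<and>
     (\<forall>j<length bs. a * bs ! j = (\<Sum>i<length bs. of_rat (M $$ (i, j)) * bs ! i)))"

text \<open>Field norm N_{K/Q}(a) = det of multiplication by a (independent of the basis).\<close>
definition field_norm :: "complex set \<Rightarrow> complex \<Rightarrow> rat" where
  "field_norm K a = det (mult_matrix (SOME bs. is_rat_basis K bs) a)"

definition norm_sums :: "complex set \<Rightarrow> rat set" where
  "norm_sums K = {(\<Sum>i<m. field_norm K (a i)) | (m :: nat) (a :: nat \<Rightarrow> complex). \<forall>i<m. a i \<in> K}"

end

(*
  The identity is an embedding of K, so K is a subfield of the reals. The norm is multiplicative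
  and N(t) = t^n for rational t, where n = [K : Q]; hence for y = p/q > 0 the number N(a) y is the
  sum of p q^(n-1) copies of N(a/q). This gives every positive rational, and every negative one
  as soon as some element has negative norm. For a primitive element g the characteristic
  polynomial of multiplication by g is the minimal polynomial of g, which has the simple real
  root g and therefore changes sign at rational points t; since N(g - t) equals this polynomial
  at t up to the sign (-1)^n, some N(g - t) is negative.
*)
theory Submission
  imports Defs "Jordan_Normal_Form.Char_Poly" "HOL-Computational_Algebra.Field_as_Ring"
begin

interpretation of_rat_poly: map_poly_idom_hom "of_rat :: rat \<Rightarrow> complex" ..

definition qpoly :: "rat poly \<Rightarrow> complex \<Rightarrow> complex" where
  "qpoly p z = poly (map_poly of_rat p) z"

lemma qpoly_add [simp]: "qpoly (p + q) z = qpoly p z + qpoly q z"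
  unfolding qpoly_def by (simp add: of_rat_hom.map_poly_hom_add)

lemma qpoly_mult [simp]: "qpoly (p * q) z = qpoly p z * qpoly q z"
  unfolding qpoly_def by (simp add: of_rat_poly.hom_mult)

lemma qpoly_diff [simp]: "qpoly (p - q) z = qpoly p z - qpoly q z"
  unfolding qpoly_def by (simp add: of_rat_poly.hom_minus)

lemma qpoly_const [simp]: "qpoly [:c:] z = of_rat c"
  unfolding qpoly_def by (cases "c = 0") (auto simp: map_poly_pCons)

lemma qpoly_0 [simp]: "qpoly 0 z = 0"
  and qpoly_1 [simp]: "qpoly 1 z = 1"
  and qpoly_x [simp]: "qpoly [:0, 1:] z = z"
  unfolding qpoly_def by simp_all

lemma qpoly_monom [simp]: "qpoly (monom c j) z = of_rat c * z ^ j"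
  unfolding qpoly_def by (simp add: map_poly_monom poly_monom)

lemma qpoly_altdef: "qpoly p z = (\<Sum>i\<le>degree p. of_rat (coeff p i) * z ^ i)"
  unfolding qpoly_def poly_altdef by (simp add: of_rat_hom.degree_map_poly_hom)

lemma qpoly_pderiv: "qpoly (pderiv p) z = poly (pderiv (map_poly of_rat p)) z"
  unfolding qpoly_def by (simp add: of_rat_hom.map_poly_pderiv)

lemma qpoly_sum_monom: "qpoly (\<Sum>j<d. monom (c j) j) z = (\<Sum>j<d. of_rat (c j) * z ^ j)"
  by (induction d) simp_all

lemma coeff_sum_monom: "coeff (\<Sum>j<d. monom (c j) j) i = (if i < d then c i else 0)"
  by (simp add: coeff_sum coeff_monom)

lemma degree_sum_monom_less:
  assumes "(\<Sum>j<d. monom (c j) j) \<noteq> 0"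
  shows "degree (\<Sum>j<d. monom (c j) j) < d"
proof -
  have "d > 0" using assms by (cases d) auto
  have "degree (\<Sum>j<d. monom (c j) j) \<le> d - 1"
    by (rule degree_le) (auto simp: coeff_sum_monom)
  thus ?thesis using \<open>d > 0\<close> by linarith
qed

lemma binomial_root_poly:
  fixes a b :: nat
  assumes "a < b" "z ^ a = z ^ b"
  shows "monom 1 b - monom 1 a \<noteq> (0 :: rat poly)" "degree (monom 1 b - monom (1 :: rat) a) = b"
    "qpoly (monom 1 b - monom 1 a) z = 0"
proof -
  let ?p = "monom 1 b - monom (1 :: rat) a"
  have lead: "coeff ?p b = 1" using assms by (simp add: coeff_monom)
  thus "?p \<noteq> 0" by (metis coeff_0 zero_neq_one)
  show "degree ?p = b"
    by (rule order.antisym, rule degree_le, use assms in \<open>auto simp: coeff_monom\<close>)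
       (metis lead le_degree zero_neq_one)
  show "qpoly ?p z = 0" using assms by simp
qed

subsection \<open>Minimal polynomials\<close>

definition rat_algebraic :: "complex \<Rightarrow> bool" where
  "rat_algebraic z \<longleftrightarrow> (\<exists>p. p \<noteq> 0 \<and> qpoly p z = 0)"

definition min_deg :: "complex \<Rightarrow> nat" where
  "min_deg z = (LEAST d. \<exists>p. p \<noteq> 0 \<and> degree p = d \<and> qpoly p z = 0)"

definition min_poly :: "complex \<Rightarrow> rat poly" where
  "min_poly z = (SOME p. degree p = min_deg z \<and> qpoly p z = 0 \<and> lead_coeff p = 1)"

lemma min_deg_le: "p \<noteq> 0 \<Longrightarrow> qpoly p z = 0 \<Longrightarrow> min_deg z \<le> degree p"
  unfolding min_deg_def by (rule Least_le) blast

lemma min_poly: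
  assumes "rat_algebraic z"
  shows "min_poly z \<noteq> 0" "degree (min_poly z) = min_deg z" "qpoly (min_poly z) z = 0"
    "lead_coeff (min_poly z) = 1"
proof -
  from assms have "\<exists>d p. p \<noteq> 0 \<and> degree p = d \<and> qpoly p z = 0"
    unfolding rat_algebraic_def by blast
  from LeastI_ex[OF this] obtain p where p: "p \<noteq> 0" "degree p = min_deg z" "qpoly p z = 0"
    unfolding min_deg_def by blast
  let ?q = "smult (inverse (lead_coeff p)) p"
  have "lead_coeff p \<noteq> 0" using p(1) by simp
  hence "degree ?q = min_deg z \<and> qpoly ?q z = 0 \<and> lead_coeff ?q = 1"
    using p by (simp add: qpoly_def of_rat_hom.map_poly_hom_smult)
  hence "degree (min_poly z) = min_deg z \<and> qpoly (min_poly z) z = 0 \<and> lead_coeff (min_poly z) = 1"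
    unfolding min_poly_def by (rule someI)
  thus "degree (min_poly z) = min_deg z" "qpoly (min_poly z) z = 0" "lead_coeff (min_poly z) = 1"
    by auto
  thus "min_poly z \<noteq> 0" by auto
qed

lemma min_poly_dvd_iff:
  assumes "rat_algebraic z"
  shows "qpoly p z = 0 \<longleftrightarrow> min_poly z dvd p"
proof
  assume "min_poly z dvd p"
  thus "qpoly p z = 0" using min_poly(3)[OF assms] by (auto elim!: dvdE)
next
  assume root: "qpoly p z = 0"
  let ?m = "min_poly z"
  have "p = ?m * (p div ?m) + p mod ?m" by simp
  hence "qpoly p z = qpoly ?m z * qpoly (p div ?m) z + qpoly (p mod ?m) z"
    by (metis qpoly_add qpoly_mult)
  hence "qpoly (p mod ?m) z = 0" using root min_poly(3)[OF assms] by simp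
  moreover have "p mod ?m \<noteq> 0 \<Longrightarrow> degree (p mod ?m) < min_deg z"
    using min_poly[OF assms] by (metis degree_mod_less')
  ultimately have "p mod ?m = 0" using min_deg_le[of "p mod ?m" z] by linarith
  thus "?m dvd p" by (simp add: mod_eq_0_iff_dvd)
qed

lemma min_deg_pos:
  assumes "rat_algebraic z"
  shows "min_deg z > 0"
proof (rule ccontr)
  assume "\<not> min_deg z > 0"
  hence "degree (min_poly z) = 0" using min_poly(2)[OF assms] by simp
  then obtain c where "min_poly z = [:c:]" by (rule degree_eq_zeroE)
  thus False using min_poly[OF assms] by simp
qed

lemma dvd_min_poly_cases:
  assumes "rat_algebraic z" "g dvd min_poly z"
  obtains "is_unit g" | "min_poly z dvd g"
proof -
  let ?m = "min_poly z"
  from assms(2) obtain h where h: "?m = g * h" by (auto elim: dvdE)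
  have "g \<noteq> 0" "h \<noteq> 0" using h min_poly(1)[OF assms(1)] by auto
  show ?thesis
  proof (cases "qpoly g z = 0")
    case True
    thus ?thesis using that min_poly_dvd_iff[OF assms(1)] by blast
  next
    case False
    hence "qpoly h z = 0" using h min_poly(3)[OF assms(1)] by (metis mult_eq_0_iff qpoly_mult)
    hence "min_deg z \<le> degree h" using min_deg_le \<open>h \<noteq> 0\<close> by blast
    moreover have "degree ?m = degree g + degree h" using h \<open>g \<noteq> 0\<close> \<open>h \<noteq> 0\<close> degree_mult_eq by metis
    ultimately have "degree g = 0" using min_poly(2)[OF assms(1)] by simp
    thus ?thesis using that \<open>g \<noteq> 0\<close> by (simp add: is_unit_iff_degree)
  qed
qed

lemma qpoly_invertible:
  assumes "rat_algebraic z" "qpoly p z \<noteq> 0"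
  obtains q where "qpoly q z * qpoly p z = 1"
proof -
  let ?m = "min_poly z"
  have "is_unit (gcd p ?m)"
  proof (cases rule: dvd_min_poly_cases[OF assms(1) gcd_dvd2[of p ?m]])
    case 2
    hence "qpoly p z = 0" using min_poly_dvd_iff[OF assms(1)] by (meson dvd_trans gcd_dvd1)
    thus ?thesis using assms(2) by simp
  qed
  obtain u v where "u * p + v * ?m = gcd p ?m" using bezout_coefficients_fst_snd by blast
  hence "u * p + v * ?m = 1" using \<open>is_unit (gcd p ?m)\<close> by (metis is_unit_gcd coprime_imp_gcd_eq_1)
  hence "qpoly u z * qpoly p z + qpoly v z * qpoly ?m z = 1" by (metis qpoly_1 qpoly_add qpoly_mult)
  thus ?thesis using that min_poly(3)[OF assms(1)] by auto
qed

lemma min_poly_simple_roots: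
  assumes "rat_algebraic z" "qpoly (min_poly z) x = 0"
  shows "qpoly (pderiv (min_poly z)) x \<noteq> 0"
proof -
  let ?m = "min_poly z"
  have "pderiv ?m \<noteq> 0" "degree (pderiv ?m) < degree ?m"
    using min_deg_pos[OF assms(1)] min_poly[OF assms(1)] by (simp_all add: pderiv_eq_0_iff degree_pderiv)
  hence "\<not> ?m dvd pderiv ?m" using dvd_imp_degree_le by fastforce
  have "is_unit (gcd ?m (pderiv ?m))"
  proof (cases rule: dvd_min_poly_cases[OF assms(1) gcd_dvd1[of ?m "pderiv ?m"]])
    case 2
    hence "?m dvd pderiv ?m" by (meson dvd_trans gcd_dvd2)
    thus ?thesis using \<open>\<not> ?m dvd pderiv ?m\<close> by contradiction
  qed
  obtain u v where "u * ?m + v * pderiv ?m = gcd ?m (pderiv ?m)"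
    using bezout_coefficients_fst_snd by blast
  hence "u * ?m + v * pderiv ?m = 1" using \<open>is_unit (gcd ?m (pderiv ?m))\<close> by (metis is_unit_gcd coprime_imp_gcd_eq_1)
  hence "qpoly u x * qpoly ?m x + qpoly v x * qpoly (pderiv ?m) x = 1" by (metis qpoly_1 qpoly_add qpoly_mult)
  thus ?thesis using assms(2) by auto
qed

interpretation Q: vector_space "\<lambda>(q :: rat) (z :: complex). of_rat q * z"
  by unfold_locales (auto simp: algebra_simps of_rat_add of_rat_mult)

definition powers_below :: "complex \<Rightarrow> nat \<Rightarrow> complex set" where
  "powers_below z d = (\<lambda>j. z ^ j) ` {..<d}"

lemma inj_on_powers_below_min_deg:
  assumes "rat_algebraic z"
  shows "inj_on (\<lambda>j. z ^ j) {..<min_deg z}"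
proof (rule inj_onI, rule ccontr)
  have no_repeat: False if "a < b" "b < min_deg z" "z ^ a = z ^ b" for a b
    using min_deg_le[OF binomial_root_poly(1,3)[OF that(1,3)]] binomial_root_poly(2)[OF that(1,3)]
      that(2) by simp
  fix i j assume "i \<in> {..<min_deg z}" "j \<in> {..<min_deg z}" "z ^ i = z ^ j" "i \<noteq> j"
  thus False using no_repeat[of i j] no_repeat[of j i] by (cases "i < j") auto
qed

lemma card_powers_below_min_deg:
  "rat_algebraic z \<Longrightarrow> card (powers_below z (min_deg z)) = min_deg z"
  unfolding powers_below_def by (simp add: card_image inj_on_powers_below_min_deg)

lemma independent_powers_below_min_deg:
  assumes "rat_algebraic z"
  shows "Q.independent (powers_below z (min_deg z))"
proof (rule Q.independent_if_scalars_zero)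
  show "finite (powers_below z (min_deg z))" unfolding powers_below_def by simp
next
  fix c x
  assume zero: "(\<Sum>x\<in>powers_below z (min_deg z). of_rat (c x) * x) = 0"
    and x: "x \<in> powers_below z (min_deg z)"
  let ?p = "\<Sum>j<min_deg z. monom (c (z ^ j)) j"
  have "qpoly ?p z = (\<Sum>x\<in>powers_below z (min_deg z). of_rat (c x) * x)"
    unfolding qpoly_sum_monom powers_below_def
    by (simp add: sum.reindex[OF inj_on_powers_below_min_deg[OF assms]])
  hence "qpoly ?p z = 0" using zero by simp
  have "?p = 0"
  proof (rule ccontr)
    assume "?p \<noteq> 0"
    from min_deg_le[OF this \<open>qpoly ?p z = 0\<close>] degree_sum_monom_less[OF this] show False by simp
  qed
  moreover from x obtain j where "j < min_deg z" "x = z ^ j" unfolding powers_below_def by auto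
  ultimately show "c x = 0" using coeff_sum_monom[of "\<lambda>j. c (z ^ j)" "min_deg z" j] by simp
qed

lemma qpoly_in_span_powers_below:
  assumes "rat_algebraic z"
  shows "qpoly p z \<in> Q.span (powers_below z (min_deg z))"
proof -
  let ?m = "min_poly z" and ?r = "p mod min_poly z"
  have "p = ?m * (p div ?m) + ?r" by simp
  hence "qpoly p z = qpoly ?m z * qpoly (p div ?m) z + qpoly ?r z" by (metis qpoly_add qpoly_mult)
  hence p_r: "qpoly p z = (\<Sum>i\<le>degree ?r. of_rat (coeff ?r i) * z ^ i)"
    using min_poly(3)[OF assms] by (simp add: qpoly_altdef)
  have "?r = 0 \<or> degree ?r < min_deg z"
    using min_poly(1,2)[OF assms] by (metis degree_mod_less')
  have "of_rat (coeff ?r i) * z ^ i \<in> Q.span (powers_below z (min_deg z))" if "i \<le> degree ?r" for i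
  proof (cases "coeff ?r i = 0")
    case True
    thus ?thesis by (simp add: Q.span_zero)
  next
    case False
    hence "i < min_deg z" using \<open>?r = 0 \<or> degree ?r < min_deg z\<close> that by auto
    thus ?thesis by (intro Q.span_scale Q.span_base) (auto simp: powers_below_def)
  qed
  thus ?thesis unfolding p_r by (intro Q.span_sum) simp
qed

lemma min_deg_le_if_powers_in_span:
  assumes "finite S" "\<And>j. z ^ j \<in> Q.span S"
  shows "rat_algebraic z \<and> min_deg z \<le> card S"
proof -
  let ?n = "card S"
  have "\<exists>p. p \<noteq> 0 \<and> degree p \<le> ?n \<and> qpoly p z = 0"
  proof (cases "inj_on (\<lambda>j. z ^ j) {..<Suc ?n}")
    case False
    then obtain a b where "a < b" "b < Suc ?n" "z ^ a = z ^ b"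
      unfolding inj_on_def by (metis lessThan_iff linorder_neqE_nat)
    with binomial_root_poly[OF \<open>a < b\<close> \<open>z ^ a = z ^ b\<close>] show ?thesis
      by (intro exI[of _ "monom 1 b - monom 1 a"]) simp
  next
    case True
    let ?T = "(\<lambda>j. z ^ j) ` {..<Suc ?n}"
    have "Q.dependent ?T"
      using Q.independent_span_bound[OF assms(1), of ?T] assms(2) card_image[OF True] by auto
    then obtain u where u: "\<exists>v\<in>?T. u v \<noteq> 0" "(\<Sum>v\<in>?T. of_rat (u v) * v) = 0"
      using Q.dependent_finite[of ?T] by auto
    let ?p = "\<Sum>j<Suc ?n. monom (u (z ^ j)) j"
    have "qpoly ?p z = 0" using u(2) by (simp add: qpoly_sum_monom sum.reindex[OF True])
    moreover from u(1) obtain j where "j < Suc ?n" "u (z ^ j) \<noteq> 0" by auto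
    hence "coeff ?p j \<noteq> 0" by (simp add: coeff_sum_monom)
    hence "?p \<noteq> 0" by (rule contrapos_nn) (simp only: coeff_0)
    ultimately show ?thesis using degree_sum_monom_less[of "\<lambda>j. u (z ^ j)" "Suc ?n"] by auto
  qed
  then obtain p where "p \<noteq> 0" "degree p \<le> ?n" "qpoly p z = 0" by blast
  thus ?thesis unfolding rat_algebraic_def using min_deg_le[of p z] by auto
qed

context
  fixes F :: "complex set"
  assumes F: "is_subfield F"
begin

lemma subfield_0: "0 \<in> F"
  and subfield_1: "1 \<in> F"
  and subfield_add: "x \<in> F \<Longrightarrow> y \<in> F \<Longrightarrow> x + y \<in> F"
  and subfield_mult: "x \<in> F \<Longrightarrow> y \<in> F \<Longrightarrow> x * y \<in> F"
  and subfield_uminus: "x \<in> F \<Longrightarrow> - x \<in> F"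
  and subfield_inverse: "x \<in> F \<Longrightarrow> inverse x \<in> F"
  using F unfolding is_subfield_def by blast+

lemma subfield_diff: "x \<in> F \<Longrightarrow> y \<in> F \<Longrightarrow> x - y \<in> F"
  unfolding diff_conv_add_uminus by (intro subfield_add subfield_uminus)

lemma subfield_divide: "x \<in> F \<Longrightarrow> y \<in> F \<Longrightarrow> x / y \<in> F"
  unfolding divide_inverse by (intro subfield_mult subfield_inverse)

lemma subfield_sum: "(\<And>i. i \<in> A \<Longrightarrow> f i \<in> F) \<Longrightarrow> sum f A \<in> F"
  by (induction A rule: infinite_finite_induct) (auto intro: subfield_0 subfield_add)

lemma subfield_power: "x \<in> F \<Longrightarrow> x ^ n \<in> F"
  by (induction n) (auto intro: subfield_1 subfield_mult)

lemma subfield_of_int: "of_int k \<in> F"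
proof -
  have "of_nat n \<in> F" for n by (induction n) (auto intro: subfield_0 subfield_1 subfield_add)
  moreover have "of_int k = (if k \<ge> 0 then of_nat (nat k) else - of_nat (nat (- k)) :: complex)"
    by simp
  ultimately show ?thesis using subfield_uminus by presburger
qed

lemma subfield_of_rat: "of_rat r \<in> F"
proof -
  obtain a b where "r = Rat.Fract a b" "b > 0" by (cases r) auto
  hence "of_rat r = (of_int a / of_int b :: complex)" by (simp add: of_rat_rat)
  thus ?thesis by (simp add: subfield_divide subfield_of_int)
qed

definition coeffs_in :: "complex poly \<Rightarrow> bool" where
  "coeffs_in p \<longleftrightarrow> (\<forall>i. coeff p i \<in> F)"

lemma coeffs_in_0: "coeffs_in 0"
  unfolding coeffs_in_def by (simp add: subfield_0)

lemma coeffs_in_map_of_rat: "coeffs_in (map_poly of_rat p)"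
  unfolding coeffs_in_def by (simp add: coeff_map_poly subfield_of_rat)

lemma coeffs_in_diff: "coeffs_in p \<Longrightarrow> coeffs_in q \<Longrightarrow> coeffs_in (p - q)"
  unfolding coeffs_in_def by (simp add: subfield_diff)

lemma coeffs_in_add: "coeffs_in p \<Longrightarrow> coeffs_in q \<Longrightarrow> coeffs_in (p + q)"
  unfolding coeffs_in_def by (simp add: subfield_add)

lemma coeffs_in_smult: "c \<in> F \<Longrightarrow> coeffs_in p \<Longrightarrow> coeffs_in (smult c p)"
  unfolding coeffs_in_def by (simp add: subfield_mult)

lemma coeffs_in_mult: "coeffs_in p \<Longrightarrow> coeffs_in q \<Longrightarrow> coeffs_in (p * q)"
  unfolding coeffs_in_def coeff_mult by (auto intro!: subfield_sum subfield_mult)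

lemma coeffs_in_monom: "c \<in> F \<Longrightarrow> coeffs_in (monom c k)"
  unfolding coeffs_in_def coeff_monom by (simp add: subfield_0)

lemma coeffs_in_pCons: "coeffs_in (pCons c p) \<longleftrightarrow> c \<in> F \<and> coeffs_in p"
proof
  assume "coeffs_in (pCons c p)"
  thus "c \<in> F \<and> coeffs_in p" unfolding coeffs_in_def by (metis coeff_pCons_0 coeff_pCons_Suc)
next
  assume "c \<in> F \<and> coeffs_in p"
  thus "coeffs_in (pCons c p)" unfolding coeffs_in_def by (simp add: coeff_pCons split: nat.split)
qed

lemma coeffs_in_pcompose: "coeffs_in p \<Longrightarrow> coeffs_in q \<Longrightarrow> coeffs_in (pcompose p q)"
  by (induction p) (auto simp: pcompose_pCons coeffs_in_pCons
      intro!: coeffs_in_add coeffs_in_mult coeffs_in_0)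

lemma coeffs_in_mod:
  assumes "coeffs_in p" "coeffs_in q"
  shows "coeffs_in (p mod q)"
  using assms(1)
proof (induction "degree p" arbitrary: p rule: less_induct)
  case less
  show ?case
  proof (cases "q = 0 \<or> degree p < degree q")
    case True
    thus ?thesis using less.prems by (auto simp: mod_poly_less)
  next
    case False
    hence "q \<noteq> 0" and deg: "degree p = (degree p - degree q) + degree q" by auto
    define c where "c = lead_coeff p / lead_coeff q"
    define p' where "p' = p - monom c (degree p - degree q) * q"
    have "coeffs_in p'"
      unfolding p'_def c_def using assms(2) less.prems
      by (intro coeffs_in_diff coeffs_in_mult coeffs_in_monom subfield_divide)
         (auto simp: coeffs_in_def)
    moreover have "p mod q = p' mod q"
    proof -
      have "p = p' + monom c (degree p - degree q) * q" unfolding p'_def by simp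
      thus ?thesis by (metis mod_mult_self1 mult.commute)
    qed
    moreover have "p' = 0 \<or> degree p' < degree p"
    proof -
      have "coeff (monom c (degree p - degree q) * q) (degree p) = lead_coeff p"
        using \<open>q \<noteq> 0\<close> unfolding c_def by (subst deg) (simp only: coeff_monom_mult, simp)
      hence "coeff p' (degree p) = 0" unfolding p'_def by simp
      moreover have "degree (monom c (degree p - degree q) * q) \<le> degree p"
        using degree_mult_le[of "monom c (degree p - degree q)" q] degree_monom_le[of c] deg
        by (metis add_le_mono1 order.trans)
      hence "degree p' \<le> degree p" unfolding p'_def by (simp add: degree_diff_le)
      ultimately show ?thesis by (metis leading_coeff_0_iff order_le_imp_less_or_eq)
    qed
    ultimately show ?thesis using less.hyps[of p'] coeffs_in_0 by (cases "p' = 0") simp_all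
  qed
qed

lemma coeffs_in_normalize:
  assumes "coeffs_in p"
  shows "coeffs_in (normalize p)"
proof -
  have "inverse (lead_coeff p) \<in> F" using assms subfield_inverse unfolding coeffs_in_def by blast
  thus ?thesis using assms by (simp add: normalize_poly_old_def coeffs_in_smult)
qed

lemma coeffs_in_gcd: "coeffs_in p \<Longrightarrow> coeffs_in q \<Longrightarrow> coeffs_in (gcd p q)"
proof (induction "degree q" arbitrary: p q rule: less_induct)
  case less
  show ?case
  proof (cases "q = 0")
    case True
    thus ?thesis using less.prems coeffs_in_normalize by simp
  next
    case False
    hence gcd_eq: "gcd p q = gcd q (p mod q)" by (simp add: gcd_mod_right gcd.commute)
    show ?thesis
    proof (cases "p mod q = 0")
      case True
      thus ?thesis using gcd_eq less.prems coeffs_in_normalize by simp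
    next
      case False
      hence "degree (p mod q) < degree q" using \<open>q \<noteq> 0\<close> by (simp add: degree_mod_less')
      thus ?thesis using less gcd_eq coeffs_in_mod by simp
    qed
  qed
qed

end

definition rat_ext :: "complex \<Rightarrow> complex set" where
  "rat_ext g = range (\<lambda>p. qpoly p g)"

lemma of_rat_in_rat_ext: "of_rat c \<in> rat_ext g"
  unfolding rat_ext_def by (metis qpoly_const rangeI)

lemma generator_in_rat_ext: "g \<in> rat_ext g"
  unfolding rat_ext_def by (metis qpoly_x rangeI)

lemma powers_below_subset_rat_ext: "powers_below g d \<subseteq> rat_ext g"
proof -
  have "g ^ j = qpoly (monom 1 j) g" for j by simp
  thus ?thesis unfolding powers_below_def rat_ext_def by blast
qed

lemma subfield_rat_ext:
  assumes "rat_algebraic g"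
  shows "is_subfield (rat_ext g)"
  unfolding is_subfield_def
proof (intro conjI ballI)
  show "0 \<in> rat_ext g" "1 \<in> rat_ext g" using of_rat_in_rat_ext[of 0] of_rat_in_rat_ext[of 1] by simp_all
  fix x y assume "x \<in> rat_ext g" "y \<in> rat_ext g"
  then obtain p q where "x = qpoly p g" "y = qpoly q g" unfolding rat_ext_def by blast
  thus "x + y \<in> rat_ext g" "x * y \<in> rat_ext g" "- x \<in> rat_ext g"
    unfolding rat_ext_def by (metis qpoly_add rangeI, metis qpoly_mult rangeI,
      metis qpoly_0 qpoly_diff diff_0 rangeI)
  show "inverse x \<in> rat_ext g"
  proof (cases "x = 0")
    case False
    then obtain q where "qpoly q g * x = 1"
      using qpoly_invertible[OF assms, of p] \<open>x = qpoly p g\<close> by blast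
    hence "inverse x = qpoly q g" by (metis inverse_unique mult.commute)
    thus ?thesis unfolding rat_ext_def by simp
  qed (simp add: \<open>0 \<in> rat_ext g\<close>)
qed

lemma subspace_rat_ext: "rat_algebraic g \<Longrightarrow> Q.subspace (rat_ext g)"
  unfolding Q.subspace_def
  using subfield_0 subfield_add subfield_mult of_rat_in_rat_ext subfield_rat_ext by blast

lemma rat_ext_subset:
  assumes "rat_algebraic g" "a \<in> rat_ext g"
  shows "rat_ext a \<subseteq> rat_ext g"
proof
  fix x assume "x \<in> rat_ext a"
  then obtain p where "x = qpoly p a" unfolding rat_ext_def by blast
  with assms show "x \<in> rat_ext g" unfolding qpoly_altdef
    by (auto intro!: subfield_sum subfield_mult subfield_power of_rat_in_rat_ext subfield_rat_ext)
qed

lemma card_independent_le_min_deg: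
  assumes "rat_algebraic g" "S \<subseteq> rat_ext g" "Q.independent S"
  shows "finite S" "card S \<le> min_deg g"
proof -
  have "S \<subseteq> Q.span (powers_below g (min_deg g))"
    using assms(2) qpoly_in_span_powers_below[OF assms(1)] unfolding rat_ext_def by blast
  from Q.independent_span_bound[OF _ assms(3) this]
  show "finite S" "card S \<le> min_deg g"
    using card_powers_below_min_deg[OF assms(1)] by (simp_all add: powers_below_def)
qed

lemma min_deg_less_if_not_in_rat_ext:
  assumes "rat_algebraic a" "rat_algebraic g" "a \<in> rat_ext g" "b \<in> rat_ext g" "b \<notin> rat_ext a"
  shows "min_deg a < min_deg g"
proof -
  let ?S = "insert b (powers_below a (min_deg a))"
  have "Q.span (powers_below a (min_deg a)) \<subseteq> rat_ext a"
    by (rule Q.span_minimal[OF powers_below_subset_rat_ext subspace_rat_ext[OF assms(1)]])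
  hence indep: "Q.independent ?S"
    using assms(5) Q.independent_insertI[OF _ independent_powers_below_min_deg[OF assms(1)]] by blast
  have "?S \<subseteq> rat_ext g"
    using assms(4) powers_below_subset_rat_ext rat_ext_subset[OF assms(2,3)] by blast
  from card_independent_le_min_deg(2)[OF assms(2) this indep] have "card ?S \<le> min_deg g" .
  have "b \<notin> powers_below a (min_deg a)" using assms(5) powers_below_subset_rat_ext by blast
  moreover have "finite (powers_below a (min_deg a))" unfolding powers_below_def by simp
  ultimately have "card ?S = Suc (min_deg a)" by (simp add: card_powers_below_min_deg[OF assms(1)])
  with \<open>card ?S \<le> min_deg g\<close> show ?thesis by simp
qed

subsection \<open>The primitive element theorem\<close>

lemma degree_eq_0_if_no_roots:
  fixes E :: "complex poly"
  assumes "\<And>z. poly E z = 0 \<Longrightarrow> False"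
  shows "degree E = 0"
  using assms fundamental_theorem_of_algebra constant_degree by blast

text \<open>The gcd of g and h, computed by the Euclidean algorithm inside F, is linear with root b.\<close>
lemma unique_common_root_in_subfield:
  assumes F: "is_subfield F" and "coeffs_in F g" "coeffs_in F h" "g \<noteq> 0"
    and root: "poly g b = 0" "poly h b = 0" and simple: "poly (pderiv g) b \<noteq> 0"
    and unique: "\<And>z. poly g z = 0 \<Longrightarrow> poly h z = 0 \<Longrightarrow> z = b"
  shows "b \<in> F"
proof -
  define D where "D = gcd g h"
  have "[:-b, 1:] dvd D" unfolding D_def using root by (simp add: poly_eq_0_iff_dvd)
  then obtain E where DE: "D = [:-b, 1:] * E" by (auto elim: dvdE)
  have "E \<noteq> 0" using DE \<open>g \<noteq> 0\<close> unfolding D_def by auto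
  have "degree E = 0"
  proof (rule degree_eq_0_if_no_roots)
    fix z assume "poly E z = 0"
    hence "poly D z = 0" unfolding DE by simp
    hence "[:-z, 1:] dvd D" using poly_eq_0_iff_dvd by blast
    hence "[:-z, 1:] dvd g" "[:-z, 1:] dvd h"
      unfolding D_def by (metis dvd_trans gcd_dvd1, metis dvd_trans gcd_dvd2)
    hence "z = b" using unique by (simp add: poly_eq_0_iff_dvd)
    with \<open>poly E z = 0\<close> obtain E' where E': "E = [:-b, 1:] * E'"
      by (auto simp: poly_eq_0_iff_dvd elim: dvdE)
    have "D dvd g" unfolding D_def by simp
    then obtain G where "g = D * G" by (rule dvdE)
    hence g: "g = [:-b, 1:] * ([:-b, 1:] * (E' * G))" unfolding DE E' by (simp only: mult.assoc)
    have "poly [:-b, 1:] b = 0" by simp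
    hence "poly (pderiv g) b = 0" unfolding g pderiv_mult poly_add poly_mult by simp
    thus False using simple by contradiction
  qed
  then obtain e where "E = [:e:]" by (rule degree_eq_zeroE)
  hence "coeff D 1 = e" "coeff D 0 = - b * e" "e \<noteq> 0" using DE \<open>E \<noteq> 0\<close> by simp_all
  moreover have "coeffs_in F D" unfolding D_def using assms(2,3) by (rule coeffs_in_gcd[OF F])
  hence "- coeff D 0 / coeff D 1 \<in> F" using F
    by (intro subfield_divide subfield_uminus) (auto simp: coeffs_in_def)
  ultimately show "b \<in> F" by simp
qed

lemma exists_rat_not_in:
  assumes "finite A"
  shows "\<exists>r. (of_rat r :: complex) \<notin> A"
proof (rule ccontr)
  assume "\<nexists>r. (of_rat r :: complex) \<notin> A"
  hence "range (of_rat :: rat \<Rightarrow> complex) \<subseteq> A" by auto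
  moreover have "inj (of_rat :: rat \<Rightarrow> complex)" by (rule injI) simp
  hence "infinite (range (of_rat :: rat \<Rightarrow> complex))"
    using infinite_UNIV_char_0 finite_imageD by blast
  ultimately show False using assms finite_subset by blast
qed

lemma primitive_element_step:
  assumes a: "rat_algebraic a" and b: "rat_algebraic b"
    and sum_algebraic: "\<And>r. rat_algebraic (a + of_rat r * b)"
  shows "\<exists>r. b \<in> rat_ext (a + of_rat r * b)"
proof -
  define f where "f = map_poly (of_rat :: rat \<Rightarrow> complex) (min_poly a)"
  define g where "g = map_poly (of_rat :: rat \<Rightarrow> complex) (min_poly b)"
  have "f \<noteq> 0" "g \<noteq> 0" "poly f a = 0" "poly g b = 0"
    using min_poly[OF a] min_poly[OF b] unfolding f_def g_def qpoly_def by simp_all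
  have fin: "finite {x. poly f x = 0}" "finite {y. poly g y = 0}"
    using poly_roots_finite \<open>f \<noteq> 0\<close> \<open>g \<noteq> 0\<close> by auto
  text \<open>Avoiding the values (x - a) / (b - y) for roots x of f and y \<noteq> b of g makes b the only
    common root of g and of h below.\<close>
  obtain r where r: "(of_rat r :: complex) \<notin>
      (\<lambda>(x, y). (x - a) / (b - y)) ` ({x. poly f x = 0} \<times> {y. poly g y = 0})"
    using exists_rat_not_in fin by (metis finite_SigmaI finite_imageI)
  define \<rho> where "\<rho> = (of_rat r :: complex)"
  define \<gamma> where "\<gamma> = a + \<rho> * b"
  define h where "h = pcompose f [:\<gamma>, - \<rho>:]"
  have poly_h: "poly h y = poly f (\<gamma> - \<rho> * y)" for y
    unfolding h_def by (simp add: poly_pcompose mult.commute)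
  have "rat_algebraic \<gamma>" unfolding \<gamma>_def \<rho>_def by (rule sum_algebraic)
  note F = subfield_rat_ext[OF this]
  have "b \<in> rat_ext \<gamma>"
  proof (rule unique_common_root_in_subfield[OF F])
    show "coeffs_in (rat_ext \<gamma>) g" unfolding g_def by (rule coeffs_in_map_of_rat[OF F])
    have "coeffs_in (rat_ext \<gamma>) [:\<gamma>, - \<rho>:]" unfolding \<rho>_def
      using F generator_in_rat_ext of_rat_in_rat_ext
      by (simp add: coeffs_in_pCons coeffs_in_0 subfield_uminus)
    thus "coeffs_in (rat_ext \<gamma>) h"
      unfolding h_def f_def by (intro coeffs_in_pcompose[OF F] coeffs_in_map_of_rat[OF F])
    show "g \<noteq> 0" "poly g b = 0" by fact+
    show "poly h b = 0" using \<open>poly f a = 0\<close> poly_h unfolding \<gamma>_def by simp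
    show "poly (pderiv g) b \<noteq> 0"
      using min_poly_simple_roots[OF b min_poly(3)[OF b]] unfolding g_def qpoly_pderiv .
    fix y assume "poly g y = 0" "poly h y = 0"
    show "y = b"
    proof (rule ccontr)
      assume "y \<noteq> b"
      hence "\<rho> = ((\<gamma> - \<rho> * y) - a) / (b - y)" unfolding \<gamma>_def by (simp add: field_simps)
      thus False using r \<open>poly g y = 0\<close> \<open>poly h y = 0\<close> poly_h unfolding \<rho>_def by force
    qed
  qed
  thus ?thesis unfolding \<gamma>_def \<rho>_def by blast
qed

locale rat_basis =
  fixes K :: "complex set" and bs :: "complex list"
  assumes subfield: "is_subfield K" and basis: "is_rat_basis K bs"
begin

lemma basis_in: "i < length bs \<Longrightarrow> bs ! i \<in> K"
  using basis nth_mem unfolding is_rat_basis_def by blast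

lemma exists_coords: "x \<in> K \<Longrightarrow> \<exists>c. x = (\<Sum>i<length bs. of_rat (c i) * bs ! i)"
  using basis unfolding is_rat_basis_def rat_span_list_def by blast

lemma coords_unique:
  assumes "(\<Sum>i<length bs. of_rat (c i) * bs ! i) = (\<Sum>i<length bs. of_rat (d i) * bs ! i)"
    and "i < length bs"
  shows "c i = d i"
proof -
  have "(\<Sum>i<length bs. of_rat (c i - d i) * bs ! i) = 0"
    using assms(1) by (simp add: of_rat_diff algebra_simps sum_subtractf)
  thus ?thesis using basis assms(2) unfolding is_rat_basis_def rat_lin_indep_def by fastforce
qed

lemma sum_delta_basis:
  "i < length bs \<Longrightarrow> (\<Sum>k<length bs. of_rat (if k = i then t else 0) * bs ! k) = of_rat t * bs ! i"
  by (simp add: if_distrib[of of_rat] if_distrib[of "\<lambda>x. x * _"] cong: if_cong)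

lemma basis_nonzero:
  assumes "i < length bs"
  shows "bs ! i \<noteq> 0"
proof
  assume "bs ! i = 0"
  hence "(\<Sum>k<length bs. of_rat (if k = i then 1 else 0) * bs ! k) = (\<Sum>k<length bs. of_rat 0 * bs ! k)"
    using sum_delta_basis[OF assms] by simp
  from coords_unique[OF this assms] show False by simp
qed

lemma dim_pos: "0 < length bs"
  using exists_coords[OF subfield_1[OF subfield]] by auto

lemma independent_basis: "Q.independent (set bs)" and card_basis: "card (set bs) = length bs"
proof -
  have inj: "inj_on (\<lambda>i. bs ! i) {..<length bs}"
  proof (rule inj_onI)
    fix i j assume ij: "i \<in> {..<length bs}" "j \<in> {..<length bs}" "bs ! i = bs ! j"
    have "(\<Sum>k<length bs. of_rat (if k = i then 1 else 0) * bs ! k)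
        = (\<Sum>k<length bs. of_rat (if k = j then 1 else 0) * bs ! k)"
      using ij sum_delta_basis by simp
    from coords_unique[OF this, of i] ij show "i = j" by (auto split: if_splits)
  qed
  have set_bs: "set bs = (\<lambda>i. bs ! i) ` {..<length bs}" by (auto simp: in_set_conv_nth)
  thus "card (set bs) = length bs" using card_image[OF inj] by simp
  show "Q.independent (set bs)"
  proof (rule Q.independent_if_scalars_zero)
    fix c x assume zero: "(\<Sum>x\<in>set bs. of_rat (c x) * x) = 0" and "x \<in> set bs"
    then obtain k where k: "k < length bs" "x = bs ! k" by (auto simp: in_set_conv_nth)
    have "(\<Sum>i<length bs. of_rat (c (bs ! i)) * bs ! i) = (\<Sum>i<length bs. of_rat 0 * bs ! i)"
      using zero unfolding set_bs by (simp add: sum.reindex[OF inj])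
    from coords_unique[OF this k(1)] show "c x = 0" using k(2) by simp
  qed simp
qed

lemma
  assumes "z \<in> K"
  shows rat_algebraic_if_in: "rat_algebraic z" and min_deg_le_dim: "min_deg z \<le> length bs"
proof -
  have "K \<subseteq> Q.span (set bs)"
  proof
    fix x assume "x \<in> K"
    then obtain c where x: "x = (\<Sum>i<length bs. of_rat (c i) * bs ! i)" using exists_coords by blast
    show "x \<in> Q.span (set bs)" unfolding x by (intro Q.span_sum Q.span_scale Q.span_base) simp
  qed
  hence "z ^ j \<in> Q.span (set bs)" for j using assms subfield_power[OF subfield] by blast
  from min_deg_le_if_powers_in_span[OF _ this] card_basis
  show "rat_algebraic z" "min_deg z \<le> length bs" by simp_all
qed

text \<open>An element of maximal degree generates K: otherwise primitive_element_step yields one of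
  larger degree.\<close>
lemma exists_primitive_element: "\<exists>g\<in>K. min_deg g = length bs"
proof -
  have "finite (min_deg ` K)" by (rule finite_subset[of _ "{..length bs}"]) (auto simp: min_deg_le_dim)
  then obtain a where a: "a \<in> K" and max: "\<And>z. z \<in> K \<Longrightarrow> min_deg z \<le> min_deg a"
    using Max_in[of "min_deg ` K"] Max_ge[of "min_deg ` K"] subfield_0[OF subfield] by fastforce
  have "K \<subseteq> rat_ext a"
  proof
    fix b assume b: "b \<in> K"
    have in_K: "a + of_rat r * b \<in> K" for r
      using a b subfield subfield_add subfield_mult subfield_of_rat by blast
    then obtain r where "b \<in> rat_ext (a + of_rat r * b)"
      using primitive_element_step[OF rat_algebraic_if_in[OF a] rat_algebraic_if_in[OF b]]
        rat_algebraic_if_in by blast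
    moreover define g where "g = a + of_rat r * b"
    ultimately have "b \<in> rat_ext g" by simp
    have alg_g: "rat_algebraic g" unfolding g_def by (rule rat_algebraic_if_in[OF in_K])
    have "a = g - of_rat r * b" unfolding g_def by simp
    hence "a \<in> rat_ext g" using subfield_rat_ext[OF alg_g] \<open>b \<in> rat_ext g\<close>
      by (metis generator_in_rat_ext of_rat_in_rat_ext subfield_diff subfield_mult)
    show "b \<in> rat_ext a"
    proof (rule ccontr)
      assume "b \<notin> rat_ext a"
      from min_deg_less_if_not_in_rat_ext[OF rat_algebraic_if_in[OF a] alg_g \<open>a \<in> rat_ext g\<close>
          \<open>b \<in> rat_ext g\<close> this] max[OF in_K[of r]] show False unfolding g_def by simp
    qed
  qed
  hence "card (set bs) \<le> min_deg a"
    using basis_in card_independent_le_min_deg(2)[OF rat_algebraic_if_in[OF a] _ independent_basis]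
    by (metis in_set_conv_nth subset_iff)
  thus ?thesis using a min_deg_le_dim[OF a] card_basis by (intro bexI[of _ a]) simp_all
qed

subsection \<open>Multiplication matrices\<close>

definition is_mult_matrix :: "complex \<Rightarrow> rat mat \<Rightarrow> bool" where
  "is_mult_matrix a M \<longleftrightarrow> M \<in> carrier_mat (length bs) (length bs) \<and>
     (\<forall>j<length bs. a * bs ! j = (\<Sum>i<length bs. of_rat (M $$ (i, j)) * bs ! i))"

lemma ex1_is_mult_matrix:
  assumes "a \<in> K"
  shows "\<exists>!M. is_mult_matrix a M"
proof (rule ex_ex1I)
  have "\<forall>j. \<exists>c. j < length bs \<longrightarrow> a * bs ! j = (\<Sum>i<length bs. of_rat (c i) * bs ! i)"
    using exists_coords assms basis_in subfield_mult[OF subfield] by blast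
  then obtain c where "\<And>j. j < length bs \<Longrightarrow> a * bs ! j = (\<Sum>i<length bs. of_rat (c j i) * bs ! i)"
    by metis
  thus "\<exists>M. is_mult_matrix a M"
    unfolding is_mult_matrix_def by (intro exI[of _ "mat (length bs) (length bs) (\<lambda>(i, j). c j i)"]) simp
next
  fix M M' assume "is_mult_matrix a M" "is_mult_matrix a M'"
  thus "M = M'" unfolding is_mult_matrix_def by (intro eq_matI) (auto intro: coords_unique)
qed

lemma is_mult_matrix_mult_matrix: "a \<in> K \<Longrightarrow> is_mult_matrix a (mult_matrix bs a)"
  using theI'[OF ex1_is_mult_matrix] unfolding mult_matrix_def is_mult_matrix_def .

lemma mult_matrix_eqI: "a \<in> K \<Longrightarrow> is_mult_matrix a M \<Longrightarrow> mult_matrix bs a = M"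
  using the1_equality[OF ex1_is_mult_matrix] unfolding mult_matrix_def is_mult_matrix_def by blast

lemma mult_matrix_carrier: "a \<in> K \<Longrightarrow> mult_matrix bs a \<in> carrier_mat (length bs) (length bs)"
  using is_mult_matrix_mult_matrix unfolding is_mult_matrix_def by blast

lemma mult_matrix_col:
  "a \<in> K \<Longrightarrow> j < length bs \<Longrightarrow> a * bs ! j = (\<Sum>i<length bs. of_rat (mult_matrix bs a $$ (i, j)) * bs ! i)"
  using is_mult_matrix_mult_matrix unfolding is_mult_matrix_def by blast

lemma mult_matrix_of_rat: "mult_matrix bs (of_rat t) = t \<cdot>\<^sub>m 1\<^sub>m (length bs)"
proof (rule mult_matrix_eqI[OF subfield_of_rat[OF subfield]])
  have "of_rat t * bs ! j = (\<Sum>i<length bs. of_rat ((t \<cdot>\<^sub>m 1\<^sub>m (length bs)) $$ (i, j)) * bs ! i)"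
    if "j < length bs" for j
  proof -
    have "(\<Sum>i<length bs. of_rat ((t \<cdot>\<^sub>m 1\<^sub>m (length bs)) $$ (i, j)) * bs ! i)
        = (\<Sum>i<length bs. of_rat (if i = j then t else 0) * bs ! i)"
      using that by (intro sum.cong) auto
    thus ?thesis using sum_delta_basis[OF that] by simp
  qed
  thus "is_mult_matrix (of_rat t) (t \<cdot>\<^sub>m 1\<^sub>m (length bs))" unfolding is_mult_matrix_def by simp
qed

lemma mult_matrix_add:
  assumes "a \<in> K" "b \<in> K"
  shows "mult_matrix bs (a + b) = mult_matrix bs a + mult_matrix bs b"
proof (rule mult_matrix_eqI)
  show "a + b \<in> K" using assms by (rule subfield_add[OF subfield])
  let ?n = "length bs" and ?A = "mult_matrix bs a" and ?B = "mult_matrix bs b"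
  have "(a + b) * bs ! j = (\<Sum>i<?n. of_rat ((?A + ?B) $$ (i, j)) * bs ! i)" if j: "j < ?n" for j
  proof -
    have "(\<Sum>i<?n. of_rat ((?A + ?B) $$ (i, j)) * bs ! i)
        = (\<Sum>i<?n. of_rat (?A $$ (i, j)) * bs ! i + of_rat (?B $$ (i, j)) * bs ! i)"
      using j mult_matrix_carrier[OF assms(1)] mult_matrix_carrier[OF assms(2)]
      by (intro sum.cong) (auto simp: of_rat_add distrib_right)
    thus ?thesis using mult_matrix_col[OF assms(1) j] mult_matrix_col[OF assms(2) j]
      by (simp add: sum.distrib distrib_right)
  qed
  thus "is_mult_matrix (a + b) (?A + ?B)"
    unfolding is_mult_matrix_def using mult_matrix_carrier[OF assms(1)] mult_matrix_carrier[OF assms(2)]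
    by auto
qed

lemma mult_matrix_mult:
  assumes a: "a \<in> K" and b: "b \<in> K"
  shows "mult_matrix bs (a * b) = mult_matrix bs a * mult_matrix bs b"
proof (rule mult_matrix_eqI)
  show "a * b \<in> K" using assms by (rule subfield_mult[OF subfield])
  let ?n = "length bs" and ?A = "mult_matrix bs a" and ?B = "mult_matrix bs b"
  have "a * b * bs ! j = (\<Sum>l<?n. of_rat ((?A * ?B) $$ (l, j)) * bs ! l)" if j: "j < ?n" for j
  proof -
    have "a * b * bs ! j = (\<Sum>k<?n. of_rat (?B $$ (k, j)) * (a * bs ! k))"
      by (simp add: mult_matrix_col[OF b j] sum_distrib_left algebra_simps)
    also have "\<dots> = (\<Sum>k<?n. \<Sum>l<?n. of_rat (?A $$ (l, k) * ?B $$ (k, j)) * bs ! l)"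
      by (simp add: mult_matrix_col[OF a] sum_distrib_left of_rat_mult mult_ac)
    also have "\<dots> = (\<Sum>l<?n. of_rat ((?A * ?B) $$ (l, j)) * bs ! l)"
      using j mult_matrix_carrier[OF a] mult_matrix_carrier[OF b]
      by (subst sum.swap) (simp add: scalar_prod_def atLeast0LessThan sum_distrib_right of_rat_sum)
    finally show ?thesis .
  qed
  thus "is_mult_matrix (a * b) (?A * ?B)"
    unfolding is_mult_matrix_def using mult_matrix_carrier[OF a] mult_matrix_carrier[OF b] by auto
qed

lemma det_mult_matrix_mult:
  "a \<in> K \<Longrightarrow> b \<in> K \<Longrightarrow> det (mult_matrix bs (a * b)) = det (mult_matrix bs a) * det (mult_matrix bs b)"
  by (simp add: mult_matrix_mult det_mult[OF mult_matrix_carrier mult_matrix_carrier])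

lemma det_mult_matrix_of_rat: "det (mult_matrix bs (of_rat t)) = t ^ length bs"
  by (simp add: mult_matrix_of_rat)

lemma poly_char_poly_mult_matrix:
  assumes "g \<in> K"
  shows "poly (char_poly (mult_matrix bs g)) t = (-1) ^ length bs * det (mult_matrix bs (g + of_rat (- t)))"
proof -
  let ?M = "mult_matrix bs g"
  have M: "?M \<in> carrier_mat (length bs) (length bs)" by (rule mult_matrix_carrier[OF assms])
  have "mult_matrix bs (g + of_rat (- t)) = char_matrix ?M t"
    using M unfolding char_matrix_def
    by (simp add: mult_matrix_add[OF assms subfield_of_rat[OF subfield]] mult_matrix_of_rat)
  moreover have "- char_matrix ?M t = (-1) \<cdot>\<^sub>m char_matrix ?M t" by (rule eq_matI) (use M in auto)
  moreover have "dim_col (char_matrix ?M t) = length bs" using M by (simp add: char_matrix_def)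
  ultimately show ?thesis using M by (simp add: char_poly_matrix)
qed

text \<open>The coordinate vector of the basis is an eigenvector of the transposed matrix.\<close>
lemma char_poly_mult_matrix_root:
  assumes "g \<in> K"
  shows "qpoly (char_poly (mult_matrix bs g)) g = 0"
proof -
  let ?n = "length bs"
  define A where "A = map_mat (of_rat :: rat \<Rightarrow> complex) (mult_matrix bs g)"
  have A: "A \<in> carrier_mat ?n ?n" unfolding A_def using mult_matrix_carrier[OF assms] by simp
  define w where "w = vec ?n (\<lambda>i. bs ! i)"
  have "w \<noteq> 0\<^sub>v ?n" using basis_nonzero[OF dim_pos] dim_pos unfolding w_def by (metis index_vec index_zero_vec(1))
  moreover have "transpose_mat A *\<^sub>v w = g \<cdot>\<^sub>v w"
    using A mult_matrix_col[OF assms] unfolding A_def w_def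
    by (intro eq_vecI) (auto simp: scalar_prod_def atLeast0LessThan mult.commute)
  ultimately have "eigenvalue (transpose_mat A) g"
    unfolding eigenvalue_def eigenvector_def using A by (intro exI[of _ w]) (auto simp: w_def)
  hence "poly (char_poly A) g = 0"
    using eigenvalue_root_char_poly[of "transpose_mat A" ?n] A by simp
  moreover have "char_poly A = map_poly of_rat (char_poly (mult_matrix bs g))"
    unfolding A_def by (rule of_rat_hom.char_poly_hom[OF mult_matrix_carrier[OF assms]])
  ultimately show ?thesis unfolding qpoly_def by simp
qed

lemma char_poly_mult_matrix_primitive:
  assumes "g \<in> K" "min_deg g = length bs"
  shows "char_poly (mult_matrix bs g) = min_poly g"
proof -
  let ?\<chi> = "char_poly (mult_matrix bs g)"
  have alg: "rat_algebraic g" by (rule rat_algebraic_if_in[OF assms(1)])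
  have \<chi>: "degree ?\<chi> = length bs" "coeff ?\<chi> (length bs) = 1"
    using degree_monic_char_poly[OF mult_matrix_carrier[OF assms(1)]] by auto
  have "min_poly g dvd ?\<chi>"
    using char_poly_mult_matrix_root[OF assms(1)] min_poly_dvd_iff[OF alg] by simp
  then obtain h where h: "?\<chi> = min_poly g * h" by (rule dvdE)
  hence "h \<noteq> 0" using \<chi> by auto
  hence "degree h = 0"
    using h \<chi>(1) min_poly(1,2)[OF alg] assms(2) by (metis add_cancel_left_right degree_mult_eq)
  then obtain c where "h = [:c:]" by (rule degree_eq_zeroE)
  moreover have "coeff ?\<chi> (length bs) = coeff (min_poly g) (length bs) * c"
    unfolding h \<open>h = [:c:]\<close> by simp
  hence "c = 1" using \<chi>(2) min_poly(2,4)[OF alg] assms(2) by simp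
  ultimately show ?thesis using h by simp
qed

end

subsection \<open>Sign changes at simple real roots\<close>

lemma rat_points_around_increasing_zero:
  fixes f :: "real \<Rightarrow> real"
  assumes "DERIV f x :> l" "l > 0" "f x = 0"
  shows "\<exists>r1\<in>\<rat>. \<exists>r2\<in>\<rat>. f r1 < 0 \<and> 0 < f r2"
proof -
  obtain d where d: "d > 0" "\<And>h. 0 < h \<Longrightarrow> h < d \<Longrightarrow> f x < f (x + h)"
    using DERIV_pos_inc_right[OF assms(1,2)] by blast
  obtain d' where d': "d' > 0" "\<And>h. 0 < h \<Longrightarrow> h < d' \<Longrightarrow> f (x - h) < f x"
    using DERIV_pos_inc_left[OF assms(1,2)] by blast
  obtain r2 where r2: "r2 \<in> \<rat>" "x < r2" "r2 < x + d" using Rats_dense_in_real[of x "x + d"] d(1) by auto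
  obtain r1 where r1: "r1 \<in> \<rat>" "x - d' < r1" "r1 < x" using Rats_dense_in_real[of "x - d'" x] d'(1) by auto
  have "0 < f r2" using d(2)[of "r2 - x"] r2 assms(3) by simp
  moreover have "f r1 < 0" using d'(2)[of "x - r1"] r1 assms(3) by simp
  ultimately show ?thesis using r1(1) r2(1) by blast
qed

lemma rat_points_around_simple_zero:
  fixes f :: "real \<Rightarrow> real"
  assumes "DERIV f x :> l" "l \<noteq> 0" "f x = 0"
  shows "\<exists>r1\<in>\<rat>. \<exists>r2\<in>\<rat>. f r1 < 0 \<and> 0 < f r2"
proof (cases "l > 0")
  case True
  thus ?thesis using rat_points_around_increasing_zero assms by blast
next
  case False
  have "DERIV (\<lambda>y. - f y) x :> - l" by (rule derivative_intros assms)+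
  from rat_points_around_increasing_zero[OF this] False assms(2,3) show ?thesis by force
qed

lemma of_real_of_rat [simp]: "complex_of_real (of_rat q) = of_rat q"
  by (induction q) (simp add: of_rat_rat)

lemma qpoly_of_real: "qpoly p (of_real x) = of_real (poly (map_poly of_rat p) x)"
proof -
  have "map_poly (of_rat :: rat \<Rightarrow> complex) p = map_poly of_real (map_poly of_rat p)"
    by (subst map_poly_map_poly) (simp_all add: o_def)
  thus ?thesis unfolding qpoly_def by simp
qed

lemma rat_sign_change_at_simple_real_root:
  assumes "g \<in> \<real>" "qpoly p g = 0" "qpoly (pderiv p) g \<noteq> 0"
  shows "\<exists>t1 t2. poly p t1 < 0 \<and> 0 < poly p t2"
proof -
  obtain x where x: "g = of_real x" using assms(1) by (auto elim: Reals_cases)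
  define P where "P = map_poly (of_rat :: rat \<Rightarrow> real) p"
  have "poly P x = 0" "poly (pderiv P) x \<noteq> 0"
    using assms(2,3) unfolding x P_def qpoly_of_real by (simp_all add: of_rat_hom.map_poly_pderiv)
  from rat_points_around_simple_zero[OF poly_DERIV this(2,1)]
  obtain r1 r2 where "r1 \<in> \<rat>" "r2 \<in> \<rat>" "poly P r1 < 0" "0 < poly P r2" by blast
  moreover have "poly P (of_rat t) = of_rat (poly p t)" for t unfolding P_def by simp
  ultimately show ?thesis by (metis Rats_cases of_rat_less_0_iff zero_less_of_rat_iff)
qed

context rat_basis
begin

lemma exists_negative_det:
  assumes "K \<subseteq> \<real>"
  shows "\<exists>a\<in>K. det (mult_matrix bs a) < 0"
proof -
  obtain g where g: "g \<in> K" "min_deg g = length bs" using exists_primitive_element by blast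
  let ?\<chi> = "char_poly (mult_matrix bs g)"
  have alg: "rat_algebraic g" by (rule rat_algebraic_if_in[OF g(1)])
  have root: "qpoly (min_poly g) g = 0" by (rule min_poly(3)[OF alg])
  moreover have "qpoly (pderiv (min_poly g)) g \<noteq> 0" by (rule min_poly_simple_roots[OF alg root])
  ultimately obtain t1 t2 where "poly ?\<chi> t1 < 0" "0 < poly ?\<chi> t2"
    using rat_sign_change_at_simple_real_root assms g(1)
    unfolding char_poly_mult_matrix_primitive[OF g] by blast
  define t where "t = (if even (length bs) then t1 else t2)"
  have "(-1) ^ length bs * poly ?\<chi> t < 0"
    unfolding t_def using \<open>poly ?\<chi> t1 < 0\<close> \<open>0 < poly ?\<chi> t2\<close> by simp
  hence "det (mult_matrix bs (g + of_rat (- t))) < 0"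
    by (simp add: poly_char_poly_mult_matrix[OF g(1)])
  moreover have "g + of_rat (- t) \<in> K"
    using subfield_add[OF subfield g(1) subfield_of_rat[OF subfield]] .
  ultimately show ?thesis by blast
qed

lemma det_times_pos_is_sum_of_dets:
  assumes "a \<in> K" "y > 0"
  shows "\<exists>(m :: nat) (f :: nat \<Rightarrow> complex).
           (\<forall>i<m. f i \<in> K) \<and> (\<Sum>i<m. det (mult_matrix bs (f i))) = det (mult_matrix bs a) * y"
proof -
  let ?n = "length bs"
  obtain p q where pq: "y = of_int p / of_int q" "q > 0" by (cases y) (auto simp: Fract_of_int_quotient)
  hence "p > 0" using assms(2) by (simp add: zero_less_divide_iff)
  define u where "u = inverse (of_int q :: rat)"
  have in_K: "a * of_rat u \<in> K" using subfield_mult[OF subfield assms(1) subfield_of_rat[OF subfield]] .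
  have "(\<Sum>i<nat (p * q ^ (?n - 1)). det (mult_matrix bs (a * of_rat u)))
      = of_int (p * q ^ (?n - 1)) * (det (mult_matrix bs a) * u ^ ?n)"
    using \<open>p > 0\<close> \<open>q > 0\<close> by (simp add: det_mult_matrix_mult[OF assms(1) subfield_of_rat[OF subfield]]
        det_mult_matrix_of_rat)
  also have "\<dots> = det (mult_matrix bs a) * y"
  proof -
    have "(of_int q :: rat) ^ ?n = of_int q * of_int q ^ (?n - 1)"
      using dim_pos by (metis Suc_diff_1 power_Suc)
    thus ?thesis using \<open>q > 0\<close> unfolding pq(1) u_def power_inverse by (simp add: field_simps)
  qed
  finally have sum: "(\<Sum>i<nat (p * q ^ (?n - 1)). det (mult_matrix bs (a * of_rat u)))
      = det (mult_matrix bs a) * y" .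
  show ?thesis
    by (intro exI[of _ "nat (p * q ^ (?n - 1))"] exI[of _ "\<lambda>_. a * of_rat u"]) (use in_K sum in simp)
qed


lemma every_rat_is_sum_of_dets:
  assumes "K \<subseteq> \<real>"
  shows "\<exists>(m :: nat) (f :: nat \<Rightarrow> complex).
           (\<forall>i<m. f i \<in> K) \<and> (\<Sum>i<m. det (mult_matrix bs (f i))) = x"
proof (cases x "0 :: rat" rule: linorder_cases)
  case less
  obtain a where "a \<in> K" "det (mult_matrix bs a) < 0" using exists_negative_det[OF assms] by blast
  thus ?thesis using det_times_pos_is_sum_of_dets[of a "x / det (mult_matrix bs a)"] less
    by (simp add: divide_neg_neg)
next
  case equal
  thus ?thesis by (intro exI[of _ 0]) simp
next
  case greater
  thus ?thesis using det_times_pos_is_sum_of_dets[OF subfield_1[OF subfield]] det_mult_matrix_of_rat[of 1]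
    by simp
qed
end

theorem mainTheorem10:
  fixes K :: "complex set"
  assumes "number_field K" and "totally_real K" and "galois_over_Q K"
  shows "norm_sums K = UNIV"
proof -
  define bs where "bs = (SOME bs. is_rat_basis K bs)"
  interpret rat_basis K bs
    using assms(1) someI_ex[of "is_rat_basis K"] unfolding number_field_def bs_def by unfold_locales auto
  have norm: "field_norm K a = det (mult_matrix bs a)" for a unfolding field_norm_def bs_def ..
  have "field_embedding K id" unfolding field_embedding_def by simp
  hence "id ` K \<subseteq> \<real>" using assms(2) unfolding totally_real_def by blast
  hence "K \<subseteq> \<real>" by simp
  have "x \<in> norm_sums K" for x
  proof -
    obtain m :: nat and f :: "nat \<Rightarrow> complex"
      where "\<forall>i<m. f i \<in> K" "(\<Sum>i<m. field_norm K (f i)) = x"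
      using every_rat_is_sum_of_dets[OF \<open>K \<subseteq> \<real>\<close>, of x] unfolding norm by blast
    thus ?thesis unfolding norm_sums_def by blast
  qed
  thus ?thesis by blast
qed

end
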